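(* Let $p>2$ be an integer, $\theta\in(0,1)$, $\eta\ge0$. For $\bm q\in\mathbb S^{n-1}$ let $\rho=\tfrac12\min_{1\le i\le n}\min\{\|\bm q-\bm e_i\|_2^2,\|\bm q+\bm e_i\|_2^2\}$. Then $$\rho\le\frac{C_{\eta,p}}{\theta(1-\theta)}\Big(\theta(1+\eta^2)^{p/2}+(1-\theta)\eta^p-\mathbb E_\Omega\big(\|\bm q_\Omega\|_2^2+\eta^2\big)^{p/2}\Big),$$ where $C_{\eta,p}=\big((1+\eta^2)^{p/2}+\eta^p-2(0.5+\eta^2)^{p/2}\big)^{-1}$.
   Context: $\bm e_i$ are the standard basis vectors of $\mathbb R^n$. $\Omega$ denotes a random subset of $\{1,\dots,n\}$ in which each index is included independently with probability $\theta$, and $\bm q_\Omega$ is the subvector of $\bm q$ indexed by $\Omega$ (so $\|\bm q_\emptyset\|_2=0$). *)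

theory Defs
  imports "HOL-Analysis.Analysis" "HOL-Probability.Probability"
begin

definition random_subset :: "real \<Rightarrow> ('n::finite \<Rightarrow> bool) pmf" where
  "random_subset \<theta> = Pi_pmf UNIV False (\<lambda>_. bernoulli_pmf \<theta>)"

definition sub_norm_sq :: "real ^ 'n \<Rightarrow> 'n set \<Rightarrow> real" where
  "sub_norm_sq q \<Omega> = (\<Sum>i\<in>\<Omega>. (q $ i)^2)"

end

theory Submission
  imports Defs
begin

text \<open>Put x_i = q_i^2 and S = \<Sum>_{i \<in> \<Omega>} x_i, which lies in [0,1], and g(x) = (x + \<eta>^2)^(p/2).
  Convexity of g on each half of [0,1] gives the pointwise bound
  g(S) \<le> (1 - S) g(0) + S g(1) - K S (1 - S) with K = 1/C_{\<eta>,p} > 0, and strict convexity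
  makes K positive. Since E S = \<theta> and E S^2 = \<theta>^2 + \<theta> (1 - \<theta>) \<Sum> x_i^2, taking expectations shows
  that the right-hand side of the theorem is at least 1 - \<Sum> q_i^4. If |q_j| is the largest
  coordinate, then \<Sum> q_i^4 \<le> q_j^2 \<le> |q_j|, while \<rho> \<le> 1 - |q_j| is the distance to the nearer of \<plusminus>e_j.\<close>

lemma convex_on_powr_nonneg:
  fixes r :: real
  assumes r: "r \<ge> 1"
  shows "convex_on {0..} (\<lambda>x::real. x powr r)"
proof (rule convex_onI)
  fix t x y :: real
  assume t: "0 < t" "t < 1" and x: "x \<in> {0..}" and y: "y \<in> {0..}"
  have scale: "(c * z) powr r \<le> c * z powr r" if "0 \<le> c" "c \<le> 1" "0 \<le> z" for c z :: real
  proof -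
    have "c powr r \<le> c" using that r by (cases "c = 0") (auto intro: powr_le_one_le)
    then show ?thesis using that by (simp add: powr_mult mult_right_mono)
  qed
  show "((1 - t) *\<^sub>R x + t *\<^sub>R y) powr r \<le> (1 - t) * x powr r + t * y powr r"
  proof (cases "x = 0 \<or> y = 0")
    case True
    then show ?thesis using scale[of t y] scale[of "1 - t" x] t x y r by auto
  next
    case False
    then have "x \<in> {0<..}" "y \<in> {0<..}" using x y by auto
    from convex_onD[OF powr_convex[OF r] _ _ this] t show ?thesis by auto
  qed
qed (simp add: convex_real_interval)

lemma convex_on_le_chord_minus_gap:
  fixes f :: "real \<Rightarrow> real"
  assumes f: "convex_on {a..a+1} f" and s: "0 \<le> s" "s \<le> 1"
  shows "f (a + s) \<le> (1 - s) * f a + s * f (a + 1)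
           - (f a + f (a + 1) - 2 * f (a + 1/2)) * (s * (1 - s))"
proof -
  \<comment> \<open>On the half of \<open>[a, a+1]\<close> containing \<open>a + s\<close>, the chord lies below the full chord by
     \<open>K s\<close> resp. \<open>K (1 - s)\<close>, which dominates \<open>K s (1 - s)\<close>.\<close>
  let ?K = "f a + f (a + 1) - 2 * f (a + 1/2)"
  have mid: "a + 1/2 = (1 - 1/2) * a + 1/2 * (a + 1)" by (simp add: field_simps)
  have "f ((1 - 1/2) * a + 1/2 * (a + 1)) \<le> (1 - 1/2) * f a + 1/2 * f (a + 1)"
    using convex_onD[OF f, of "1/2" a "a + 1"] by simp
  then have "f (a + 1/2) \<le> (1 - 1/2) * f a + 1/2 * f (a + 1)"
    by (simp only: mid[symmetric])
  then have K: "?K \<ge> 0" by simp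
  show ?thesis
  proof (cases "s \<le> 1/2")
    case True
    have "f ((1 - 2 * s) * a + (2 * s) * (a + 1/2)) \<le> (1 - 2 * s) * f a + (2 * s) * f (a + 1/2)"
      using convex_onD[OF f, of "2 * s" a "a + 1/2"] True s by auto
    moreover have "(1 - 2 * s) * a + (2 * s) * (a + 1/2) = a + s" by (simp add: algebra_simps)
    moreover have "0 \<le> ?K * s\<^sup>2" using K by simp
    ultimately show ?thesis by (simp add: algebra_simps power2_eq_square)
  next
    case False
    have "f ((1 - (2 * s - 1)) * (a + 1/2) + (2 * s - 1) * (a + 1))
          \<le> (1 - (2 * s - 1)) * f (a + 1/2) + (2 * s - 1) * f (a + 1)"
      using convex_onD[OF f, of "2 * s - 1" "a + 1/2" "a + 1"] False s by auto
    moreover have "(1 - (2 * s - 1)) * (a + 1/2) + (2 * s - 1) * (a + 1) = a + s"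
      by (simp add: algebra_simps)
    moreover have "0 \<le> ?K * (1 - s)\<^sup>2" using K by simp
    ultimately show ?thesis by (simp add: algebra_simps power2_eq_square)
  qed
qed

lemma powr_midpoint_gap_pos:
  fixes r a :: real
  assumes r: "r > 1" and a: "a \<ge> 0"
  shows "a powr r + (a + 1) powr r - 2 * (a + 1/2) powr r > 0"
proof (cases "a = 0")
  case True
  have "(1/2::real) powr r < (1/2) powr 1" using r by (intro powr_less_mono') auto
  then show ?thesis using True by simp
next
  case False
  then have a0: "a > 0" using a by simp
  have D: "DERIV (\<lambda>x. x powr r) x :> r * x powr (r - 1)" if "x > 0" for x :: real
    using that by (auto intro!: derivative_eq_intros simp: powr_diff field_simps)
  obtain z1 where z1: "a < z1" "z1 < a + 1/2"
    and e1: "(a + 1/2) powr r - a powr r = (a + 1/2 - a) * (r * z1 powr (r - 1))"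
    using MVT2[of a "a + 1/2" "\<lambda>x. x powr r" "\<lambda>x. r * x powr (r - 1)"] D a0 by force
  obtain z2 where z2: "a + 1/2 < z2" "z2 < a + 1"
    and e2: "(a + 1) powr r - (a + 1/2) powr r = (a + 1 - (a + 1/2)) * (r * z2 powr (r - 1))"
    using MVT2[of "a + 1/2" "a + 1" "\<lambda>x. x powr r" "\<lambda>x. r * x powr (r - 1)"] D a0 by force
  have "z1 powr (r - 1) < z2 powr (r - 1)" using z1 z2 a0 r by (intro powr_less_mono2) auto
  then have "r * z1 powr (r - 1) < r * z2 powr (r - 1)" using r by simp
  then show ?thesis using e1 e2 by simp
qed

lemma integrable_random_subset [simp]:
  "integrable (measure_pmf (random_subset \<theta> :: ('n::finite \<Rightarrow> bool) pmf)) (f :: _ \<Rightarrow> real)"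
  by (rule integrable_measure_pmf_finite) simp

lemma expectation_random_subset_prod:
  assumes "0 \<le> \<theta>" "\<theta> \<le> 1"
  shows "measure_pmf.expectation (random_subset \<theta> :: ('n::finite \<Rightarrow> bool) pmf)
           (\<lambda>\<omega>. \<Prod>k\<in>A. of_bool (\<omega> k)) = \<theta> ^ card A"
proof -
  define f where "f = (\<lambda>k v. if k \<in> A then of_bool v else (1::real))"
  have restrict: "(\<Prod>k\<in>UNIV. h k) = (\<Prod>k\<in>A. h k)" if "\<And>k. k \<notin> A \<Longrightarrow> h k = 1"
    for h :: "'n \<Rightarrow> real"
    using that by (intro prod.mono_neutral_right) auto
  have "measure_pmf.expectation (random_subset \<theta>) (\<lambda>\<omega>::'n \<Rightarrow> bool. \<Prod>k\<in>UNIV. f k (\<omega> k))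
      = (\<Prod>k\<in>UNIV. measure_pmf.expectation (bernoulli_pmf \<theta>) (f k))"
    unfolding random_subset_def
    by (rule expectation_prod_Pi_pmf) (auto simp: f_def intro: integrable_measure_pmf_finite)
  also have "\<dots> = (\<Prod>k\<in>A. measure_pmf.expectation (bernoulli_pmf \<theta>) (f k))"
    by (rule restrict) (simp add: f_def)
  also have "\<dots> = \<theta> ^ card A"
    using assms by (simp add: f_def)
  also have "(\<lambda>\<omega>::'n \<Rightarrow> bool. \<Prod>k\<in>UNIV. f k (\<omega> k)) = (\<lambda>\<omega>. \<Prod>k\<in>A. of_bool (\<omega> k))"
    by (subst restrict) (auto simp: f_def)
  finally show ?thesis .
qed

lemma expectation_random_subset_indicator:
  assumes "0 \<le> \<theta>" "\<theta> \<le> 1"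
  shows "measure_pmf.expectation (random_subset \<theta> :: ('n::finite \<Rightarrow> bool) pmf)
           (\<lambda>\<omega>. of_bool (\<omega> i)) = \<theta>"
  using expectation_random_subset_prod[OF assms, of "{i}"] by simp

lemma expectation_random_subset_indicator_pair:
  assumes "0 \<le> \<theta>" "\<theta> \<le> 1"
  shows "measure_pmf.expectation (random_subset \<theta> :: ('n::finite \<Rightarrow> bool) pmf)
           (\<lambda>\<omega>. of_bool (\<omega> i) * of_bool (\<omega> j)) = (if i = j then \<theta> else \<theta>\<^sup>2)"
proof (cases "i = j")
  case True
  then show ?thesis using expectation_random_subset_indicator[OF assms, of i]
    by (simp flip: of_bool_conj)
next
  case False
  then show ?thesis using expectation_random_subset_prod[OF assms, of "{i, j}"]
    by (simp add: power2_eq_square)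
qed

lemma sum_random_subset_indicator:
  fixes \<omega> :: "'n::finite \<Rightarrow> bool" and w :: "'n \<Rightarrow> real"
  shows   "(\<Sum>i\<in>{i. \<omega> i}. w i) = (\<Sum>i\<in>UNIV. w i * of_bool (\<omega> i))"
  by simp

lemma expectation_random_subset_sum:
  fixes w :: "'n::finite \<Rightarrow> real"
  assumes "0 \<le> \<theta>" "\<theta> \<le> 1"
  shows "measure_pmf.expectation (random_subset \<theta>) (\<lambda>\<omega>. \<Sum>i\<in>{i. \<omega> i}. w i)
           = \<theta> * (\<Sum>i\<in>UNIV. w i)"
  by (simp only: sum_random_subset_indicator Bochner_Integration.integral_sum
      integrable_random_subset integral_mult_right_zero
      expectation_random_subset_indicator[OF assms] sum_distrib_left mult.commute simp_thms)

lemma expectation_random_subset_sum_sq: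
  fixes w :: "'n::finite \<Rightarrow> real"
  assumes "0 \<le> \<theta>" "\<theta> \<le> 1"
  shows "measure_pmf.expectation (random_subset \<theta>) (\<lambda>\<omega>. (\<Sum>i\<in>{i. \<omega> i}. w i)\<^sup>2)
           = \<theta>\<^sup>2 * (\<Sum>i\<in>UNIV. w i)\<^sup>2 + \<theta> * (1 - \<theta>) * (\<Sum>i\<in>UNIV. (w i)\<^sup>2)"
proof -
  have "(\<lambda>\<omega>. (\<Sum>i\<in>{i. \<omega> i}. w i)\<^sup>2)
      = (\<lambda>\<omega>. \<Sum>i\<in>UNIV. \<Sum>j\<in>UNIV. w i * w j * (of_bool (\<omega> i) * of_bool (\<omega> j)))"
    by (simp only: sum_random_subset_indicator power2_eq_square sum_product) (simp add: algebra_simps)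
  then have "measure_pmf.expectation (random_subset \<theta>) (\<lambda>\<omega>. (\<Sum>i\<in>{i. \<omega> i}. w i)\<^sup>2)
      = (\<Sum>i\<in>UNIV. \<Sum>j\<in>UNIV. w i * w j * (if i = j then \<theta> else \<theta>\<^sup>2))"
    by (simp only: Bochner_Integration.integral_sum integrable_random_subset
        integral_mult_right_zero expectation_random_subset_indicator_pair[OF assms] simp_thms)
  also have "\<dots> = (\<Sum>i\<in>UNIV. \<Sum>j\<in>UNIV. \<theta>\<^sup>2 * (w i * w j) + (if i = j then \<theta> * (1 - \<theta>) * (w i)\<^sup>2 else 0))"
    by (intro sum.cong refl) (auto simp: power2_eq_square algebra_simps)
  also have "\<dots> = \<theta>\<^sup>2 * (\<Sum>i\<in>UNIV. \<Sum>j\<in>UNIV. w i * w j) + \<theta> * (1 - \<theta>) * (\<Sum>i\<in>UNIV. (w i)\<^sup>2)"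
    by (simp add: sum.distrib sum_distrib_left)
  also have "\<dots> = \<theta>\<^sup>2 * (\<Sum>i\<in>UNIV. w i)\<^sup>2 + \<theta> * (1 - \<theta>) * (\<Sum>i\<in>UNIV. (w i)\<^sup>2)"
    by (simp add: power2_eq_square sum_product)
  finally show ?thesis .
qed

lemma expectation_convex_random_subset_gap:
  fixes f :: "real \<Rightarrow> real" and w :: "'n::finite \<Rightarrow> real"
  assumes f: "convex_on {a..a+1} f"
    and w: "\<And>i. 0 \<le> w i" "(\<Sum>i\<in>UNIV. w i) = 1"
    and \<theta>: "0 \<le> \<theta>" "\<theta> \<le> 1"
  shows "(f a + f (a + 1) - 2 * f (a + 1/2)) * (\<theta> * (1 - \<theta>)) * (1 - (\<Sum>i\<in>UNIV. (w i)\<^sup>2))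
    \<le> \<theta> * f (a + 1) + (1 - \<theta>) * f a
       - measure_pmf.expectation (random_subset \<theta>) (\<lambda>\<omega>. f (a + (\<Sum>i\<in>{i. \<omega> i}. w i)))"
proof -
  define K where "K = f a + f (a + 1) - 2 * f (a + 1/2)"
  define S where "S = (\<lambda>\<omega>::'n \<Rightarrow> bool. \<Sum>i\<in>{i. \<omega> i}. w i)"
  have S: "0 \<le> S \<omega>" "S \<omega> \<le> 1" for \<omega>
  proof -
    show "0 \<le> S \<omega>" unfolding S_def by (intro sum_nonneg w)
    have "S \<omega> \<le> (\<Sum>i\<in>UNIV. w i)" unfolding S_def by (intro sum_mono2) (auto intro: w)
    then show "S \<omega> \<le> 1" using w by simp
  qed
  have "measure_pmf.expectation (random_subset \<theta>) (\<lambda>\<omega>. f (a + S \<omega>))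
      \<le> measure_pmf.expectation (random_subset \<theta>)
           (\<lambda>\<omega>. (1 - S \<omega>) * f a + S \<omega> * f (a + 1) - K * (S \<omega> - (S \<omega>)\<^sup>2))"
    using convex_on_le_chord_minus_gap[OF f S] unfolding K_def
    by (intro integral_mono) (auto simp: power2_eq_square algebra_simps)
  also have "\<dots> = f a - \<theta> * f a + \<theta> * f (a + 1) - K * (\<theta> * (1 - \<theta>) * (1 - (\<Sum>i\<in>UNIV. (w i)\<^sup>2)))"
  proof -
    have ES: "measure_pmf.expectation (random_subset \<theta>) S = \<theta>"
      using expectation_random_subset_sum[OF \<theta>, of w] w unfolding S_def by simp
    have ES2: "measure_pmf.expectation (random_subset \<theta>) (\<lambda>\<omega>. S \<omega> * S \<omega>)
        = \<theta>\<^sup>2 + \<theta> * (1 - \<theta>) * (\<Sum>i\<in>UNIV. (w i)\<^sup>2)"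
      using expectation_random_subset_sum_sq[OF \<theta>, of w] w unfolding S_def
      by (simp add: power2_eq_square)
    show ?thesis by (simp add: ES ES2 algebra_simps power2_eq_square)
  qed
  finally show ?thesis unfolding K_def S_def by (simp add: algebra_simps)
qed

lemma norm_sq_diff_axis:
  fixes q :: "real ^ 'n::finite"
  shows "(norm (q - axis i 1))\<^sup>2 = (norm q)\<^sup>2 - 2 * q $ i + 1"
    and "(norm (q + axis i 1))\<^sup>2 = (norm q)\<^sup>2 + 2 * q $ i + 1"
  unfolding power2_norm_eq_inner
  by (simp_all add: inner_diff_left inner_diff_right inner_add_left inner_add_right
      inner_axis inner_commute[of "axis i 1" q] inner_axis_axis)

lemma power2_norm_vec_eq_sum:
  fixes q :: "real ^ 'n::finite"
  shows "(norm q)\<^sup>2 = (\<Sum>i\<in>UNIV. (q $ i)\<^sup>2)"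
  by (simp add: norm_vec_def L2_set_def sum_nonneg)

lemma half_min_dist_axis_le:
  fixes q :: "real ^ 'n::finite"
  assumes q: "norm q = 1"
  shows "(1/2) * (MIN i. min ((norm (q - axis i 1))\<^sup>2) ((norm (q + axis i 1))\<^sup>2))
           \<le> 1 - (\<Sum>i\<in>UNIV. ((q $ i)\<^sup>2)\<^sup>2)"
proof -
  have "(MAX i. \<bar>q $ i\<bar>) \<in> range (\<lambda>i. \<bar>q $ i\<bar>)" by (intro Max_in) auto
  then obtain j where "\<bar>q $ j\<bar> = (MAX i. \<bar>q $ i\<bar>)" by (metis imageE)
  then have j: "\<bar>q $ i\<bar> \<le> \<bar>q $ j\<bar>" for i by simp
  have sum_sq: "(\<Sum>i\<in>UNIV. (q $ i)\<^sup>2) = 1"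
    using power2_norm_vec_eq_sum[of q] q by simp
  have qj: "\<bar>q $ j\<bar> \<le> 1"
    using component_le_norm_cart[of q j] q by simp
  have "(\<Sum>i\<in>UNIV. ((q $ i)\<^sup>2)\<^sup>2) \<le> (\<Sum>i\<in>UNIV. (q $ j)\<^sup>2 * (q $ i)\<^sup>2)"
  proof (rule sum_mono)
    fix i
    have "(q $ i)\<^sup>2 \<le> (q $ j)\<^sup>2" using j[of i] by (simp add: abs_le_square_iff)
    then show "((q $ i)\<^sup>2)\<^sup>2 \<le> (q $ j)\<^sup>2 * (q $ i)\<^sup>2"
      unfolding power2_eq_square[of "(q $ i)\<^sup>2"] by (rule mult_right_mono) simp_all
  qed
  also have "\<dots> = (q $ j)\<^sup>2"
    by (simp add: sum_distrib_left[symmetric] sum_sq)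
  also have "\<dots> \<le> \<bar>q $ j\<bar>"
  proof -
    have "(q $ j)\<^sup>2 = \<bar>q $ j\<bar> * \<bar>q $ j\<bar>" by (simp add: power2_eq_square)
    moreover have "\<bar>q $ j\<bar> * \<bar>q $ j\<bar> \<le> \<bar>q $ j\<bar>" by (rule mult_left_le[OF qj abs_ge_zero])
    ultimately show ?thesis by linarith
  qed
  finally have fourth_powers: "(\<Sum>i\<in>UNIV. ((q $ i)\<^sup>2)\<^sup>2) \<le> \<bar>q $ j\<bar>" .
  have "(MIN i. min ((norm (q - axis i 1))\<^sup>2) ((norm (q + axis i 1))\<^sup>2))
      \<le> min ((norm (q - axis j 1))\<^sup>2) ((norm (q + axis j 1))\<^sup>2)"
    by (intro Min_le) auto
  also have "\<dots> = 2 - 2 * \<bar>q $ j\<bar>"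
    unfolding norm_sq_diff_axis q by (cases "q $ j \<ge> 0") auto
  finally show ?thesis using fourth_powers by simp
qed

lemma powr_half_of_sq:
  fixes x :: real
  assumes "0 < p"
  shows "(x\<^sup>2) powr (real p / 2) = \<bar>x\<bar> ^ p"
proof (cases "x = 0")
  case False
  have "x\<^sup>2 = \<bar>x\<bar> powr 2" using False by (simp add: powr_numeral)
  then have "(x\<^sup>2) powr (real p / 2) = (\<bar>x\<bar> powr 2) powr (real p / 2)" by simp
  also have "\<dots> = \<bar>x\<bar> powr (real p)" by (simp only: powr_powr) simp
  also have "\<dots> = \<bar>x\<bar> ^ p" using False by (simp add: powr_realpow)
  finally show ?thesis .
qed (use assms in simp)

theorem mainTheorem11:
  fixes q :: "real ^ 'n::finite" and p :: nat and \<theta> \<eta> :: real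
  assumes "p > 2" and "0 < \<theta>" and "\<theta> < 1" and "\<eta> \<ge> 0" and "norm q = 1"
  shows "(1/2) * (MIN i. min ((norm (q - axis i 1))^2) ((norm (q + axis i 1))^2))
    \<le> (1 / ((1 + \<eta>^2) powr (p/2) + \<eta>^p - 2 * (0.5 + \<eta>^2) powr (p/2)))
       / (\<theta> * (1 - \<theta>))
       * (\<theta> * (1 + \<eta>^2) powr (p/2) + (1 - \<theta>) * \<eta>^p
          - measure_pmf.expectation (random_subset \<theta>)
              (\<lambda>\<omega>. (sub_norm_sq q {i. \<omega> i} + \<eta>^2) powr (p/2)))"
proof -
  define f where "f = (\<lambda>x::real. x powr (real p / 2))"
  define a where "a = \<eta>\<^sup>2"
  have \<eta>p: "\<eta> ^ p = f a"
    using assms(1,4) unfolding f_def a_def by (simp add: powr_half_of_sq)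
  define K where "K = f a + f (a + 1) - 2 * f (a + 1/2)"
  have K: "K > 0"
    unfolding K_def f_def using powr_midpoint_gap_pos[of "real p / 2" a] assms(1) a_def by simp
  have "convex_on {0..} f"
    unfolding f_def using assms(1) by (intro convex_on_powr_nonneg) simp
  then have "convex_on {a..a+1} f"
    by (rule convex_on_subset) (auto simp: a_def)
  from expectation_convex_random_subset_gap[OF this, of "\<lambda>i. (q $ i)\<^sup>2" \<theta>]
  have gap: "K * (\<theta> * (1 - \<theta>)) * (1 - (\<Sum>i\<in>UNIV. ((q $ i)\<^sup>2)\<^sup>2))
      \<le> \<theta> * f (a + 1) + (1 - \<theta>) * f a
         - measure_pmf.expectation (random_subset \<theta>) (\<lambda>\<omega>. f (a + sub_norm_sq q {i. \<omega> i}))"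
    using assms(2,3,5) power2_norm_vec_eq_sum[of q] unfolding K_def sub_norm_sq_def by simp
  have "K * (\<theta> * (1 - \<theta>)) > 0" using K assms(2,3) by simp
  with gap have "1 - (\<Sum>i\<in>UNIV. ((q $ i)\<^sup>2)\<^sup>2)
      \<le> (1 / K) / (\<theta> * (1 - \<theta>)) * (\<theta> * f (a + 1) + (1 - \<theta>) * f a
         - measure_pmf.expectation (random_subset \<theta>) (\<lambda>\<omega>. f (a + sub_norm_sq q {i. \<omega> i})))"
    by (simp add: pos_le_divide_eq mult.commute)
  with half_min_dist_axis_le[OF assms(5)]
  have "(1/2) * (MIN i. min ((norm (q - axis i 1))\<^sup>2) ((norm (q + axis i 1))\<^sup>2))
      \<le> (1 / K) / (\<theta> * (1 - \<theta>)) * (\<theta> * f (a + 1) + (1 - \<theta>) * f a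
         - measure_pmf.expectation (random_subset \<theta>) (\<lambda>\<omega>. f (a + sub_norm_sq q {i. \<omega> i})))"
    by (rule order_trans)
  moreover have "K = (1 + \<eta>^2) powr (p/2) + \<eta>^p - 2 * (0.5 + \<eta>^2) powr (p/2)"
    unfolding K_def \<eta>p by (simp add: f_def a_def add.commute)
  ultimately show ?thesis
    unfolding \<eta>p by (simp add: f_def a_def add.commute)
qed

end
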